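(* Let $d\geq 0$ be an integer. Every $d$-degenerate graph $G$ with $n\geq d$ vertices satisfies $c(G)\leq 2^d(n-d+1)$.
   Context: All graphs are finite, simple and undirected. A graph $G$ is $d$-degenerate if every subgraph of $G$ has a vertex of degree at most $d$. A clique of a graph $G$ is a (possibly empty) set of pairwise adjacent vertices; $c(G)$ denotes the number of cliques of $G$ (including the empty clique, all single vertices and all edges). *)

theory Defs
  imports Main
begin

definition graph :: "'a set \<Rightarrow> 'a set set \<Rightarrow> bool" where
  "graph V E \<longleftrightarrow> finite V \<and> (\<forall>e\<in>E. e \<subseteq> V \<and> card e = 2)"

definition degree :: "'a set set \<Rightarrow> 'a \<Rightarrow> nat" where
  "degree E v = card {e\<in>E. v \<in> e}"

definition subgraph :: "'a set \<Rightarrow> 'a set set \<Rightarrow> 'a set \<Rightarrow> 'a set set \<Rightarrow> bool" where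
  "subgraph H F V E \<longleftrightarrow> graph H F \<and> H \<subseteq> V \<and> F \<subseteq> E"

definition degenerate :: "nat \<Rightarrow> 'a set \<Rightarrow> 'a set set \<Rightarrow> bool" where
  "degenerate d V E \<longleftrightarrow>
     (\<forall>H F. subgraph H F V E \<and> H \<noteq> {} \<longrightarrow> (\<exists>v\<in>H. degree F v \<le> d))"

definition is_clique :: "'a set \<Rightarrow> 'a set set \<Rightarrow> 'a set \<Rightarrow> bool" where
  "is_clique V E C \<longleftrightarrow> C \<subseteq> V \<and> (\<forall>u\<in>C. \<forall>v\<in>C. u \<noteq> v \<longrightarrow> {u, v} \<in> E)"

text \<open>Number of cliques, including the empty clique.\<close>
definition num_cliques :: "'a set \<Rightarrow> 'a set set \<Rightarrow> nat" where
  "num_cliques V E = card {C. is_clique V E C}"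

end

theory Submission
  imports Defs
begin

text \<open>Remove a vertex v of degree at most d. A clique either avoids v, and is then a clique
  of G - v, or consists of v together with a set of neighbours of v, of which there are at
  most 2^d. Hence c(G) \<le> 2^d + c(G - v), and since G - v is again d-degenerate, induction
  on n - d reduces everything to the base case n = d, where c(G) \<le> 2^n = 2^d.\<close>

definition neighbours :: "'a set \<Rightarrow> 'a set set \<Rightarrow> 'a \<Rightarrow> 'a set" where
  "neighbours V E v = {u\<in>V. {u, v} \<in> E}"

lemma num_cliques_le_pow_card:
  assumes "finite V"
  shows "num_cliques V E \<le> 2 ^ card V"
proof -
  have "{C. is_clique V E C} \<subseteq> Pow V"
    by (auto simp: is_clique_def)
  then show ?thesis
    unfolding num_cliques_def using assms by (metis card_Pow card_mono finite_Pow_iff)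
qed

lemma graph_delete_vertex:
  assumes "graph V E"
  shows "graph (V - {v}) {e\<in>E. v \<notin> e}"
  using assms by (auto simp: graph_def)

lemma degenerate_subgraph:
  assumes "degenerate d V E" and "subgraph H F V E"
  shows "degenerate d H F"
  using assms unfolding degenerate_def subgraph_def by (meson subset_trans)

lemma degenerate_delete_vertex:
  assumes "graph V E" and "degenerate d V E"
  shows "degenerate d (V - {v}) {e\<in>E. v \<notin> e}"
proof (rule degenerate_subgraph[OF assms(2)])
  show "subgraph (V - {v}) {e\<in>E. v \<notin> e} V E"
    unfolding subgraph_def using graph_delete_vertex[OF assms(1)] by blast
qed

lemma degenerate_obtain_low_degree_vertex:
  assumes "graph V E" and "degenerate d V E" and "V \<noteq> {}"
  obtains v where "v \<in> V" and "degree E v \<le> d"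
proof -
  have "subgraph V E V E"
    using assms(1) by (simp add: subgraph_def)
  then show ?thesis
    using assms(2,3) that unfolding degenerate_def by blast
qed

lemma card_neighbours_le_degree:
  assumes "graph V E"
  shows "card (neighbours V E v) \<le> degree E v"
proof -
  have "v \<notin> neighbours V E v"
    using assms by (auto simp: neighbours_def graph_def)
  then have "inj_on (\<lambda>u. {u, v}) (neighbours V E v)"
    by (auto simp: inj_on_def doubleton_eq_iff)
  moreover have "(\<lambda>u. {u, v}) ` neighbours V E v \<subseteq> {e\<in>E. v \<in> e}"
    by (auto simp: neighbours_def)
  moreover have "finite {e\<in>E. v \<in> e}"
    using assms by (auto simp: graph_def intro: finite_subset[of _ "Pow V"])
  ultimately show ?thesis
    unfolding degree_def by (rule card_inj_on_le)
qed

lemma card_cliques_containing_le: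
  assumes "graph V E"
  shows "card {C. is_clique V E C \<and> v \<in> C} \<le> 2 ^ degree E v"
proof -
  let ?A = "{C. is_clique V E C \<and> v \<in> C}"
  have "inj_on (\<lambda>C. C - {v}) ?A"
    by (auto simp: inj_on_def)
  moreover have "(\<lambda>C. C - {v}) ` ?A \<subseteq> Pow (neighbours V E v)"
    by (auto simp: is_clique_def neighbours_def insert_commute)
  moreover have "finite (neighbours V E v)"
    using assms by (simp add: graph_def neighbours_def)
  ultimately have "card ?A \<le> card (Pow (neighbours V E v))"
    by (intro card_inj_on_le) auto
  also have "\<dots> \<le> 2 ^ degree E v"
    using card_neighbours_le_degree[OF assms] \<open>finite (neighbours V E v)\<close>
    by (simp add: card_Pow)
  finally show ?thesis .
qed

lemma num_cliques_delete_vertex: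
  assumes "graph V E"
  shows "num_cliques V E \<le> 2 ^ degree E v + num_cliques (V - {v}) {e\<in>E. v \<notin> e}"
proof -
  have avoiding: "{C. is_clique V E C \<and> v \<notin> C} = {C. is_clique (V - {v}) {e\<in>E. v \<notin> e} C}"
    by (auto simp: is_clique_def)
  have "num_cliques V E = card ({C. is_clique V E C \<and> v \<in> C} \<union> {C. is_clique V E C \<and> v \<notin> C})"
    unfolding num_cliques_def by (rule arg_cong[where f = card]) blast
  also have "\<dots> \<le> card {C. is_clique V E C \<and> v \<in> C} + card {C. is_clique V E C \<and> v \<notin> C}"
    by (rule card_Un_le)
  also have "\<dots> \<le> 2 ^ degree E v + num_cliques (V - {v}) {e\<in>E. v \<notin> e}"
    using card_cliques_containing_le[OF assms] by (simp add: avoiding num_cliques_def)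
  finally show ?thesis .
qed

lemma degenerate_obtain_vertex_num_cliques_le:
  assumes "graph V E" and "degenerate d V E" and "V \<noteq> {}"
  obtains v where "v \<in> V"
    and "num_cliques V E \<le> 2 ^ d + num_cliques (V - {v}) {e\<in>E. v \<notin> e}"
proof -
  obtain v where v: "v \<in> V" "degree E v \<le> d"
    using assms by (rule degenerate_obtain_low_degree_vertex)
  have "num_cliques V E \<le> 2 ^ degree E v + num_cliques (V - {v}) {e\<in>E. v \<notin> e}"
    using assms(1) by (rule num_cliques_delete_vertex)
  also have "\<dots> \<le> 2 ^ d + num_cliques (V - {v}) {e\<in>E. v \<notin> e}"
    using v(2) by simp
  finally show ?thesis
    using that v(1) by blast
qed

theorem proposition2:
  fixes V :: "'a set" and E :: "'a set set" and d :: nat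
  assumes "graph V E"
    and "degenerate d V E"
    and "card V \<ge> d"
  shows "num_cliques V E \<le> 2 ^ d * (card V - d + 1)"
  using assms
proof (induction "card V - d" arbitrary: V E)
  case 0
  then show ?case
    using num_cliques_le_pow_card[of V E] by (simp add: graph_def)
next
  case (Suc k)
  then have "V \<noteq> {}" by auto
  with Suc.prems(1,2) obtain v where "v \<in> V"
    and step: "num_cliques V E \<le> 2 ^ d + num_cliques (V - {v}) {e\<in>E. v \<notin> e}"
    by (rule degenerate_obtain_vertex_num_cliques_le)
  have "card (V - {v}) = card V - 1"
    using \<open>v \<in> V\<close> Suc.prems(1) by (simp add: graph_def)
  then have "k = card (V - {v}) - d" and "d \<le> card (V - {v})"
    using Suc.hyps(2) by simp_all
  then have "num_cliques (V - {v}) {e\<in>E. v \<notin> e} \<le> 2 ^ d * (k + 1)"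
    using Suc.hyps(1) graph_delete_vertex[OF Suc.prems(1)]
      degenerate_delete_vertex[OF Suc.prems(1,2)] by simp
  then show ?case
    using step by (simp flip: Suc.hyps(2))
qed

end
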